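(* Let $(X,d)$ be a metric space admitting a weak conical bicombing and let $T$ be an isometry of $X$ (a surjective distance-preserving map) with $\inf_{x\in X}d(x,Tx)>0$. Then $T$ has infinite order; in fact $d(x,T^{n}x)\rightarrow\infty$ as $n\to\infty$ for every $x\in X$.
   Context: A weak conical bicombing on $X$ is a map $\sigma:X\times X\times[0,1]\to X$, $(x,y,t)\mapsto\sigma_{xy}(t)$, such that each $\sigma_{xy}$ is a constant speed geodesic from $x$ to $y$ (i.e. $\sigma_{xy}(0)=x$, $\sigma_{xy}(1)=y$, $d(\sigma_{xy}(s),\sigma_{xy}(t))=|s-t|\,d(x,y)$), and $d(\sigma_{xy}(t),\sigma_{xy'}(t))\le t\,d(y,y')$ for all $x,y,y'\in X$ and $t\in[0,1]$. *)

theory Defs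
  imports "HOL-Analysis.Analysis"
begin

definition weak_conical_bicombing :: "('a::metric_space \<Rightarrow> 'a \<Rightarrow> real \<Rightarrow> 'a) \<Rightarrow> bool" where
  "weak_conical_bicombing \<sigma> \<longleftrightarrow>
     (\<forall>x y. \<sigma> x y 0 = x \<and> \<sigma> x y 1 = y \<and>
        (\<forall>s\<in>{0..1}. \<forall>t\<in>{0..1}. dist (\<sigma> x y s) (\<sigma> x y t) = \<bar>s - t\<bar> * dist x y)) \<and>
     (\<forall>x y y'. \<forall>t\<in>{0..1}. dist (\<sigma> x y t) (\<sigma> x y' t) \<le> t * dist y y')"

definition isometry_of :: "('a::metric_space \<Rightarrow> 'a) \<Rightarrow> bool" where
  "isometry_of T \<longleftrightarrow> surj T \<and> (\<forall>x y. dist (T x) (T y) = dist x y)"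

end

theory Submission
  imports Defs
begin

text \<open>Let \<open>\<delta>\<close> be the minimal displacement of \<open>T\<close> and \<open>\<alpha> = d(x, T\<^sup>N x) / N\<close>. By subadditivity the
  two-sided orbit \<open>T\<^sup>j x\<close> (\<open>j \<in> \<int>\<close>) stays within \<open>\<alpha>|j| + C\<close> of \<open>x\<close>. For \<open>0 < \<lambda> < 1\<close> the map
  \<open>u \<mapsto> \<sigma>(x, Tu, \<lambda>)\<close> is a \<open>\<lambda>\<close>-contraction; the conical inequality shows that its iterates \<open>z\<^sub>k\<close>
  keep the distance bounds \<open>\<alpha>|j| + C + \<lambda>\<alpha>/(1-\<lambda>)\<close> to the orbit, so
  \<open>\<delta> \<le> d(z\<^sub>k\<^sub>+\<^sub>1, T z\<^sub>k\<^sub>+\<^sub>1) \<le> (1-\<lambda>) d(z\<^sub>k, T\<^sup>-\<^sup>1 x) + d(z\<^sub>k, z\<^sub>k\<^sub>+\<^sub>1) \<le> \<alpha> + (1-\<lambda>) C + \<lambda>\<^sup>k d(x, Tx)\<close>.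
  Letting \<open>k \<rightarrow> \<infinity>\<close> and \<open>\<lambda> \<rightarrow> 1\<close> gives \<open>N \<delta> \<le> d(x, T\<^sup>N x)\<close>, which forces both claims when \<open>\<delta> > 0\<close>.\<close>

lemma subadditive_le_linear:
  fixes a :: "nat \<Rightarrow> real"
  assumes sub: "\<And>m n. a (m + n) \<le> a m + a n" and "0 \<le> a N" and "0 < N"
  shows "\<exists>C. \<forall>m. a m \<le> a N / N * m + C"
proof (intro exI allI)
  fix m
  have mult: "a (q * N + r) \<le> q * a N + a r" for q r
  proof (induction q)
    case (Suc q)
    have "a (Suc q * N + r) \<le> a N + a (q * N + r)"
      using sub[of N "q * N + r"] by (simp add: add.assoc)
    with Suc show ?case by (simp add: algebra_simps)
  qed simp
  have "real (m div N) * real N \<le> real m"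
    by (metis of_nat_le_iff of_nat_mult div_times_less_eq_dividend)
  then have "real (m div N) * N * a N \<le> m * a N"
    using \<open>0 \<le> a N\<close> by (rule mult_right_mono)
  then have "real (m div N) * a N \<le> a N / N * m"
    using \<open>0 < N\<close> by (simp add: field_simps)
  moreover have "a (m mod N) \<le> Max (a ` {..<N})"
    using \<open>0 < N\<close> by (intro Max_ge) auto
  ultimately show "a m \<le> a N / N * m + Max (a ` {..<N})"
    using mult[of "m div N" "m mod N"] by simp
qed

lemma wcb_dist_param:
  assumes "weak_conical_bicombing \<sigma>" "s \<in> {0..1}" "t \<in> {0..1}"
  shows "dist (\<sigma> x y s) (\<sigma> x y t) = \<bar>s - t\<bar> * dist x y"
  using assms unfolding weak_conical_bicombing_def by blast

lemma wcb_dist_start: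
  assumes "weak_conical_bicombing \<sigma>" "t \<in> {0..1}"
  shows "dist x (\<sigma> x y t) = t * dist x y"
  using wcb_dist_param[OF assms(1) _ assms(2), of 0] assms
  unfolding weak_conical_bicombing_def by simp

lemma wcb_dist_end:
  assumes "weak_conical_bicombing \<sigma>" "t \<in> {0..1}"
  shows "dist (\<sigma> x y t) y = (1 - t) * dist x y"
  using wcb_dist_param[OF assms(1) assms(2), of 1] assms
  unfolding weak_conical_bicombing_def by simp

lemma wcb_conical:
  assumes "weak_conical_bicombing \<sigma>" "t \<in> {0..1}"
  shows "dist (\<sigma> x y t) (\<sigma> x y' t) \<le> t * dist y y'"
  using assms unfolding weak_conical_bicombing_def by blast

lemma isometry_of_dist:
  "isometry_of T \<Longrightarrow> dist (T x) (T y) = dist x y"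
  unfolding isometry_of_def by blast

lemma isometry_of_funpow_dist:
  "isometry_of T \<Longrightarrow> dist ((T ^^ n) x) ((T ^^ n) y) = dist x y"
  by (induction n) (simp_all add: isometry_of_dist)

lemma orbit_dist_subadditive:
  assumes "isometry_of T"
  shows "dist x ((T ^^ (m + n)) x) \<le> dist x ((T ^^ m) x) + dist x ((T ^^ n) x)"
proof -
  have "dist x ((T ^^ (m + n)) x) \<le> dist x ((T ^^ m) x) + dist ((T ^^ m) x) ((T ^^ m) ((T ^^ n) x))"
    by (simp add: funpow_add dist_triangle)
  then show ?thesis
    using assms by (simp add: isometry_of_funpow_dist)
qed

definition int_orbit :: "('a \<Rightarrow> 'a) \<Rightarrow> 'a \<Rightarrow> int \<Rightarrow> 'a" where
  "int_orbit T x j = (if 0 \<le> j then (T ^^ nat j) x else (inv T ^^ nat (- j)) x)"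

lemma int_orbit_0 [simp]: "int_orbit T x 0 = x"
  by (simp add: int_orbit_def)

lemma int_orbit_step:
  assumes "surj T"
  shows "T (int_orbit T x (j - 1)) = int_orbit T x j"
proof (cases "1 \<le> j")
  case True
  then have "nat j = Suc (nat (j - 1))"
    by simp
  with True show ?thesis
    by (simp add: int_orbit_def)
next
  case False
  then have "nat (1 - j) = Suc (nat (- j))"
    by simp
  with False assms show ?thesis
    by (simp add: int_orbit_def surj_f_inv_f)
qed

lemma dist_int_orbit:
  assumes "isometry_of T"
  shows "dist x (int_orbit T x j) = dist x ((T ^^ nat \<bar>j\<bar>) x)"
proof (cases "0 \<le> j")
  case False
  have "surj T"
    using assms by (simp add: isometry_of_def)
  have return: "(T ^^ n) (int_orbit T x (- n)) = x" for n :: nat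
  proof (induction n)
    case (Suc n)
    have "- int (Suc n) = - int n - 1"
      by simp
    then have "(T ^^ Suc n) (int_orbit T x (- Suc n)) = (T ^^ n) (T (int_orbit T x (- int n - 1)))"
      by (simp only: funpow_Suc_right comp_apply)
    with Suc show ?case
      using int_orbit_step[OF \<open>surj T\<close>] by simp
  qed simp
  have "dist x (int_orbit T x j) = dist ((T ^^ nat (- j)) x) ((T ^^ nat (- j)) (int_orbit T x j))"
    using assms by (simp add: isometry_of_funpow_dist)
  also have "\<dots> = dist x ((T ^^ nat \<bar>j\<bar>) x)"
    using return[of "nat (- j)"] False by (simp add: dist_commute)
  finally show ?thesis .
qed (simp add: int_orbit_def)

primrec anchored_iter :: "('a \<Rightarrow> 'a \<Rightarrow> real \<Rightarrow> 'a) \<Rightarrow> ('a \<Rightarrow> 'a) \<Rightarrow> 'a \<Rightarrow> real \<Rightarrow> nat \<Rightarrow> 'a" where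
  "anchored_iter \<sigma> T x l 0 = x"
| "anchored_iter \<sigma> T x l (Suc k) = \<sigma> x (T (anchored_iter \<sigma> T x l k)) l"

lemma anchored_iter_dist_succ:
  assumes "weak_conical_bicombing \<sigma>" "isometry_of T" "l \<in> {0..1}"
  shows "dist (anchored_iter \<sigma> T x l k) (anchored_iter \<sigma> T x l (Suc k)) \<le> l ^ k * dist x (T x)"
proof (induction k)
  case 0
  have "l * dist x (T x) \<le> dist x (T x)"
    using assms(3) by (simp add: mult_left_le_one_le)
  with assms show ?case
    by (simp add: wcb_dist_start)
next
  case (Suc k)
  have "dist (anchored_iter \<sigma> T x l (Suc k)) (anchored_iter \<sigma> T x l (Suc (Suc k)))
      \<le> l * dist (T (anchored_iter \<sigma> T x l k)) (T (anchored_iter \<sigma> T x l (Suc k)))"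
    using wcb_conical[OF assms(1,3)] by simp
  also have "\<dots> = l * dist (anchored_iter \<sigma> T x l k) (anchored_iter \<sigma> T x l (Suc k))"
    using assms(2) by (simp add: isometry_of_dist)
  also have "\<dots> \<le> l ^ Suc k * dist x (T x)"
    using mult_left_mono[OF Suc, of l] assms(3) by (simp add: mult.assoc)
  finally show ?case .
qed

text \<open>The slack \<open>K = \<lambda>\<alpha>/(1-\<lambda>)\<close> is the fixed point of \<open>K \<mapsto> \<lambda>(K + \<alpha>)\<close>, which absorbs the
  shift \<open>j \<mapsto> j - 1\<close> of the orbit index caused by the \<open>T\<close> inside the contraction.\<close>

lemma anchored_iter_dist_int_orbit:
  fixes \<alpha> C :: real
  assumes wcb: "weak_conical_bicombing \<sigma>" and iso: "isometry_of T"
    and l: "0 < l" "l < 1" and "0 \<le> \<alpha>"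
    and orbit: "\<And>j. dist x (int_orbit T x j) \<le> \<alpha> * \<bar>j\<bar> + C"
  shows "dist (anchored_iter \<sigma> T x l k) (int_orbit T x j) \<le> \<alpha> * \<bar>j\<bar> + C + l * \<alpha> / (1 - l)"
proof (induction k arbitrary: j)
  case 0
  have "0 \<le> l * \<alpha> / (1 - l)"
    using l \<open>0 \<le> \<alpha>\<close> by simp
  with orbit[of j] show ?case
    by simp
next
  case (Suc k)
  define K where "K = l * \<alpha> / (1 - l)"
  have K: "l * (K + \<alpha>) = K"
    using l by (simp add: K_def field_simps)
  let ?z = "anchored_iter \<sigma> T x l k" and ?P = "int_orbit T x"
  have lI: "l \<in> {0..1}"
    using l by simp
  have "dist (anchored_iter \<sigma> T x l (Suc k)) (?P j)
      \<le> dist (\<sigma> x (T ?z) l) (\<sigma> x (?P j) l) + dist (\<sigma> x (?P j) l) (?P j)"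
    by (simp add: dist_triangle)
  also have "\<dots> \<le> l * dist (T ?z) (?P j) + (1 - l) * dist x (?P j)"
    using wcb_conical[OF wcb lI] wcb_dist_end[OF wcb lI] by (intro add_mono) auto
  also have "dist (T ?z) (?P j) = dist ?z (?P (j - 1))"
    using iso isometry_of_dist[OF iso, of ?z "?P (j - 1)"]
    by (simp add: isometry_of_def int_orbit_step)
  also have "l * dist ?z (?P (j - 1)) \<le> l * (\<alpha> * \<bar>j\<bar> + C + K + \<alpha>)"
  proof -
    have "\<alpha> * \<bar>j - 1\<bar> \<le> \<alpha> * (\<bar>j\<bar> + 1)"
      using \<open>0 \<le> \<alpha>\<close> by (intro mult_left_mono) auto
    with Suc[of "j - 1"] have "dist ?z (?P (j - 1)) \<le> \<alpha> * \<bar>j\<bar> + C + K + \<alpha>"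
      by (simp add: K_def algebra_simps)
    with l show ?thesis
      by (simp add: mult_left_mono)
  qed
  also have "(1 - l) * dist x (?P j) \<le> (1 - l) * (\<alpha> * \<bar>j\<bar> + C)"
    using orbit[of j] l by simp
  also have "l * (\<alpha> * \<bar>j\<bar> + C + K + \<alpha>) + (1 - l) * (\<alpha> * \<bar>j\<bar> + C) = \<alpha> * \<bar>j\<bar> + C + K"
    using K by (simp add: algebra_simps)
  finally show ?case
    by (simp add: K_def)
qed

lemma displacement_le_orbit_slope_approx:
  fixes \<sigma> :: "'a::metric_space \<Rightarrow> 'a \<Rightarrow> real \<Rightarrow> 'a" and T :: "'a \<Rightarrow> 'a" and \<alpha> C :: real
  assumes wcb: "weak_conical_bicombing \<sigma>" and iso: "isometry_of T"
    and displ: "\<And>z. \<delta> \<le> dist z (T z)"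
    and l: "0 < l" "l < 1" and "0 \<le> \<alpha>"
    and orbit: "\<And>j. dist x (int_orbit T x j) \<le> \<alpha> * \<bar>j\<bar> + C"
  shows "\<delta> \<le> \<alpha> + (1 - l) * C + l ^ k * dist x (T x)"
proof -
  let ?z = "anchored_iter \<sigma> T x l"
  have lI: "l \<in> {0..1}"
    using l by simp
  have x: "T (int_orbit T x (- 1)) = x"
    using iso int_orbit_step[of T x 0] by (simp add: isometry_of_def)
  have "\<delta> \<le> dist (?z (Suc k)) (T (?z (Suc k)))"
    by (rule displ)
  also have "\<dots> \<le> dist (?z (Suc k)) (T (?z k)) + dist (T (?z k)) (T (?z (Suc k)))"
    by (rule dist_triangle)
  also have "dist (?z (Suc k)) (T (?z k)) = (1 - l) * dist x (T (?z k))"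
    by (simp add: wcb_dist_end[OF wcb lI])
  also have "dist x (T (?z k)) = dist (?z k) (int_orbit T x (- 1))"
    using isometry_of_dist[OF iso, of "int_orbit T x (- 1)" "?z k"] by (simp add: x dist_commute)
  also have "dist (T (?z k)) (T (?z (Suc k))) \<le> l ^ k * dist x (T x)"
    using anchored_iter_dist_succ[OF wcb iso lI] by (simp add: isometry_of_dist[OF iso])
  also have "(1 - l) * dist (?z k) (int_orbit T x (- 1)) \<le> (1 - l) * (\<alpha> + C + l * \<alpha> / (1 - l))"
    using anchored_iter_dist_int_orbit[OF wcb iso l \<open>0 \<le> \<alpha>\<close> orbit, of k "- 1"] l
    by (intro mult_left_mono) auto
  also have "(1 - l) * (\<alpha> + C + l * \<alpha> / (1 - l)) = \<alpha> + (1 - l) * C"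
    using l by (simp add: field_simps)
  finally show ?thesis
    by simp
qed

lemma displacement_le_orbit_slope:
  fixes \<sigma> :: "'a::metric_space \<Rightarrow> 'a \<Rightarrow> real \<Rightarrow> 'a" and T :: "'a \<Rightarrow> 'a" and \<alpha> C :: real
  assumes wcb: "weak_conical_bicombing \<sigma>" and iso: "isometry_of T"
    and displ: "\<And>z. \<delta> \<le> dist z (T z)" and "0 \<le> \<alpha>"
    and orbit: "\<And>j. dist x (int_orbit T x j) \<le> \<alpha> * \<bar>j\<bar> + C"
  shows "\<delta> \<le> \<alpha>"
proof -
  have "\<delta> \<le> \<alpha> + (1 - l) * C" if l: "0 < l" "l < 1" for l
  proof (rule tendsto_lowerbound)
    show "(\<lambda>k. \<alpha> + (1 - l) * C + l ^ k * dist x (T x)) \<longlonglongrightarrow> \<alpha> + (1 - l) * C"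
      using l by (auto intro!: tendsto_eq_intros LIMSEQ_power_zero)
    show "\<forall>\<^sub>F k in sequentially. \<delta> \<le> \<alpha> + (1 - l) * C + l ^ k * dist x (T x)"
      using displacement_le_orbit_slope_approx[OF wcb iso displ l \<open>0 \<le> \<alpha>\<close> orbit] by simp
  qed simp
  then show ?thesis
  proof (intro tendsto_lowerbound)
    show "((\<lambda>l. \<alpha> + (1 - l) * C) \<longlongrightarrow> \<alpha>) (at_left 1)"
      by (auto intro!: tendsto_eq_intros)
  qed (auto intro: eventually_mono[OF eventually_at_left_real[of 0 1]])
qed

lemma displacement_le_orbit_average:
  fixes \<sigma> :: "'a::metric_space \<Rightarrow> 'a \<Rightarrow> real \<Rightarrow> 'a" and T :: "'a \<Rightarrow> 'a"
  assumes wcb: "weak_conical_bicombing \<sigma>" and iso: "isometry_of T"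
    and displ: "\<And>z. \<delta> \<le> dist z (T z)"
  shows "\<delta> * N \<le> dist x ((T ^^ N) x)"
proof (cases "N = 0")
  case False
  then have "0 < N"
    by simp
  define a where "a n = dist x ((T ^^ n) x)" for n
  define \<alpha> where "\<alpha> = a N / N"
  obtain C where C: "\<And>m. a m \<le> \<alpha> * m + C"
    using subadditive_le_linear[of a N] orbit_dist_subadditive[OF iso] \<open>0 < N\<close>
    unfolding a_def \<alpha>_def by auto
  have "\<delta> \<le> \<alpha>"
  proof (rule displacement_le_orbit_slope[OF wcb iso displ])
    show "0 \<le> \<alpha>"
      by (simp add: \<alpha>_def a_def)
    show "dist x (int_orbit T x j) \<le> \<alpha> * \<bar>j\<bar> + C" for j
      using C[of "nat \<bar>j\<bar>"] by (simp add: dist_int_orbit[OF iso] a_def)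
  qed
  then show ?thesis
    using \<open>0 < N\<close> by (simp add: \<alpha>_def a_def field_simps)
qed simp

theorem corollary2:
  fixes \<sigma> :: "'a::metric_space \<Rightarrow> 'a \<Rightarrow> real \<Rightarrow> 'a" and T :: "'a \<Rightarrow> 'a"
  assumes "weak_conical_bicombing \<sigma>"
    and "isometry_of T"
    and "(INF x. dist x (T x)) > 0"
  shows "(\<forall>n::nat. n \<ge> 1 \<longrightarrow> T ^^ n \<noteq> id) \<and>
         (\<forall>x. filterlim (\<lambda>n. dist x ((T ^^ n) x)) at_top sequentially)"
proof -
  define \<delta> where "\<delta> = (INF x. dist x (T x))"
  have "\<delta> > 0"
    using assms(3) by (simp add: \<delta>_def)
  have "\<delta> \<le> dist z (T z)" for z
    unfolding \<delta>_def by (rule cINF_lower) (auto intro: bdd_belowI[of _ 0])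
  then have linear: "\<delta> * n \<le> dist x ((T ^^ n) x)" for n x
    using displacement_le_orbit_average[OF assms(1,2)] by simp
  have "T ^^ n \<noteq> id" if "n \<ge> 1" for n
  proof
    assume "T ^^ n = id"
    with linear[of n undefined] have "\<delta> * n \<le> 0"
      by simp
    with \<open>\<delta> > 0\<close> \<open>n \<ge> 1\<close> show False
      by (simp add: mult_le_0_iff)
  qed
  moreover have "filterlim (\<lambda>n. dist x ((T ^^ n) x)) at_top sequentially" for x
  proof (rule filterlim_at_top_mono)
    show "filterlim (\<lambda>n. \<delta> * real n) at_top sequentially"
      using filterlim_tendsto_pos_mult_at_top[OF tendsto_const \<open>\<delta> > 0\<close> filterlim_real_sequentially] .
    show "\<forall>\<^sub>F n in sequentially. \<delta> * real n \<le> dist x ((T ^^ n) x)"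
      using linear by simp
  qed
  ultimately show ?thesis
    by blast
qed

end
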